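(* For each integer $n\ge3$ there exist finite rooted binary trees $T_1,T_2$, each with $n$ nodes, such that the right-arm rotation distance between them satisfies $d_{RA}(T_1,T_2)=2n-2$.
   Context: Trees: finite rooted binary trees, each internal vertex (node) having a left and a right child. The right arm consists of the root and all nodes reachable from the root by a path of right edges. Right rotation at a node $N$ whose left child $M$ is a node (with $A,B$ the left and right subtrees of $M$, $C$ the right subtree of $N$) replaces the subtree at $N$ by one whose root has left subtree $A$ and right child a node with left subtree $B$ and right subtree $C$; left rotation at $N$ is the inverse operation. The right-arm rotation distance $d_{RA}(T_1,T_2)$ is the minimal number of rotations, each performed at a node on the right arm, needed to transform $T_1$ into $T_2$. *)

theory Defs
  imports Main "HOL-Library.Extended_Nat"
begin

datatype btree = Leaf | Node btree btree

fun nodes :: "btree \<Rightarrow> nat" where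
  "nodes Leaf = 0"
| "nodes (Node l r) = Suc (nodes l + nodes r)"

text \<open>One rotation (right or left) performed at a node on the right arm.
  The right arm consists of the root and nodes reachable via right edges,
  hence the recursion into the right subtree only.\<close>
inductive ra_step :: "btree \<Rightarrow> btree \<Rightarrow> bool" where
  rot_right: "ra_step (Node (Node A B) C) (Node A (Node B C))"
| rot_left:  "ra_step (Node A (Node B C)) (Node (Node A B) C)"
| arm:       "ra_step R R' \<Longrightarrow> ra_step (Node L R) (Node L R')"

definition d_RA :: "btree \<Rightarrow> btree \<Rightarrow> enat" where
  "d_RA T1 T2 = (if \<exists>k. (ra_step ^^ k) T1 T2
                 then enat (LEAST k. (ra_step ^^ k) T1 T2) else \<infinity>)"

end

theory Submission
  imports Defs
begin

text \<open>
  Take for \<open>T\<^sub>1\<close> a root whose left subtree is a right comb with \<open>n - 1\<close> nodes and for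
  \<open>T\<^sub>2\<close> the left comb with \<open>n\<close> nodes. Rotating right at the root \<open>n - 1\<close> times turns
  \<open>T\<^sub>1\<close> into the right comb, and rotating left at the root \<open>n - 1\<close> times turns that
  into \<open>T\<^sub>2\<close>. For the lower bound, let \<open>\<Phi>(t)\<close> be the length of the left spine of \<open>t\<close>
  minus the length of the right spine of the left subtree hanging off the last node
  of the right arm. A right-arm rotation raises \<open>\<Phi>\<close> by at most one. The first
  rotation out of \<open>T\<^sub>1\<close> and the last one into \<open>T\<^sub>2\<close> are forced and do not change \<open>\<Phi>\<close>,
  and between them \<open>\<Phi>\<close> has to climb from \<open>3 - n\<close> to \<open>n - 1\<close>.
\<close>

definition right_comb :: "nat \<Rightarrow> btree" where
  "right_comb k = (Node Leaf ^^ k) Leaf"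

definition left_comb :: "nat \<Rightarrow> btree" where
  "left_comb k = ((\<lambda>t. Node t Leaf) ^^ k) Leaf"

lemma right_comb_simps [simp]:
  "right_comb 0 = Leaf"
  "right_comb (Suc k) = Node Leaf (right_comb k)"
  by (simp_all add: right_comb_def)

lemma left_comb_simps [simp]:
  "left_comb 0 = Leaf"
  "left_comb (Suc k) = Node (left_comb k) Leaf"
  by (simp_all add: left_comb_def)

lemma nodes_right_comb [simp]: "nodes (right_comb k) = k"
  by (induction k) simp_all

lemma nodes_left_comb [simp]: "nodes (left_comb k) = k"
  by (induction k) simp_all

lemma relpowp_ra_step_arm:
  "(ra_step ^^ k) R R' \<Longrightarrow> (ra_step ^^ k) (Node L R) (Node L R')"
proof (induction k arbitrary: R')
  case 0
  then show ?case by simp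
next
  case (Suc k)
  then obtain R'' where "(ra_step ^^ k) R R''" "ra_step R'' R'"
    by (auto elim: relpowp_Suc_E)
  with Suc.IH show ?case
    by (meson ra_step.arm relpowp_Suc_I)
qed

lemma relpowp_ra_step_rotate_right:
  "(ra_step ^^ k) (Node ((Node Leaf ^^ k) l) r) ((Node Leaf ^^ k) (Node l r))"
proof (induction k)
  case 0
  then show ?case by simp
next
  case (Suc k)
  have "ra_step (Node ((Node Leaf ^^ Suc k) l) r) (Node Leaf (Node ((Node Leaf ^^ k) l) r))"
    by (simp add: ra_step.rot_right)
  moreover have "(ra_step ^^ k) (Node Leaf (Node ((Node Leaf ^^ k) l) r))
                                 ((Node Leaf ^^ Suc k) (Node l r))"
    using relpowp_ra_step_arm[OF Suc.IH] by simp
  ultimately show ?case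
    by (rule relpowp_Suc_I2)
qed

lemma relpowp_ra_step_rotate_left:
  "(ra_step ^^ k) (Node l ((Node Leaf ^^ k) r)) (Node (((\<lambda>t. Node t Leaf) ^^ k) l) r)"
proof (induction k arbitrary: l)
  case 0
  then show ?case by simp
next
  case (Suc k)
  have "ra_step (Node l ((Node Leaf ^^ Suc k) r)) (Node (Node l Leaf) ((Node Leaf ^^ k) r))"
    by (simp add: ra_step.rot_left)
  moreover have "((\<lambda>t. Node t Leaf) ^^ k) (Node l Leaf) = ((\<lambda>t. Node t Leaf) ^^ Suc k) l"
    by (simp only: funpow_Suc_right comp_apply)
  ultimately show ?case
    using Suc.IH[of "Node l Leaf"] by (metis relpowp_Suc_I2)
qed

lemma relpowp_ra_step_to_left_comb:
  "(ra_step ^^ (2 * k)) (Node (right_comb k) Leaf) (left_comb (Suc k))"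
proof -
  have "(ra_step ^^ k) (Node (right_comb k) Leaf) (right_comb (Suc k))"
    using relpowp_ra_step_rotate_right[of k Leaf Leaf]
    by (simp only: right_comb_def funpow_Suc_right comp_apply)
  moreover have "(ra_step ^^ k) (right_comb (Suc k)) (left_comb (Suc k))"
    using relpowp_ra_step_rotate_left[of k Leaf Leaf]
    by (simp add: right_comb_def left_comb_def)
  ultimately show ?thesis
    by (simp add: mult_2 relpowp_trans)
qed

fun left_spine_length :: "btree \<Rightarrow> nat" where
  "left_spine_length Leaf = 0"
| "left_spine_length (Node l r) = Suc (left_spine_length l)"

fun right_spine_length :: "btree \<Rightarrow> nat" where
  "right_spine_length Leaf = 0"
| "right_spine_length (Node l r) = Suc (right_spine_length r)"

fun last_left_subtree :: "btree \<Rightarrow> btree" where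
  "last_left_subtree Leaf = Leaf"
| "last_left_subtree (Node l Leaf) = l"
| "last_left_subtree (Node l (Node l' r')) = last_left_subtree (Node l' r')"

definition arm_potential :: "btree \<Rightarrow> int" where
  "arm_potential t = int (left_spine_length t) - int (right_spine_length (last_left_subtree t))"

lemma right_spine_length_right_comb [simp]: "right_spine_length (right_comb k) = k"
  by (induction k) simp_all

lemma left_spine_length_left_comb [simp]: "left_spine_length (left_comb k) = k"
  by (induction k) simp_all

lemma ra_step_not_Leaf: "ra_step t t' \<Longrightarrow> t \<noteq> Leaf \<and> t' \<noteq> Leaf"
  by (auto elim: ra_step.cases)

lemma last_left_subtree_Node:
  "r \<noteq> Leaf \<Longrightarrow> last_left_subtree (Node l r) = last_left_subtree r"
  by (cases r) auto

lemma ra_step_last_left_subtree: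
  "ra_step t t' \<Longrightarrow> right_spine_length (last_left_subtree t)
                      \<le> Suc (right_spine_length (last_left_subtree t'))"
proof (induction rule: ra_step.induct)
  case (rot_right A B C)
  then show ?case by (cases C) auto
next
  case (rot_left A B C)
  then show ?case by (cases C) auto
next
  case (arm R R' L)
  then show ?case by (auto simp: last_left_subtree_Node dest: ra_step_not_Leaf)
qed

lemma ra_step_arm_potential:
  assumes "ra_step t t'"
  shows "arm_potential t' \<le> arm_potential t + 1"
  using assms
proof cases
  case (rot_right A B C)
  then show ?thesis by (cases C) (auto simp: arm_potential_def)
next
  case (rot_left A B C)
  then show ?thesis by (cases C) (auto simp: arm_potential_def)
next
  case (arm R R' L)
  with ra_step_last_left_subtree[OF arm(3)] show ?thesis
    by (auto simp: arm_potential_def last_left_subtree_Node dest: ra_step_not_Leaf)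
qed

lemma relpowp_ra_step_arm_potential:
  "(ra_step ^^ k) t t' \<Longrightarrow> arm_potential t' \<le> arm_potential t + int k"
proof (induction k arbitrary: t')
  case 0
  then show ?case by simp
next
  case (Suc k)
  then obtain t'' where "(ra_step ^^ k) t t''" "ra_step t'' t'"
    by (auto elim: relpowp_Suc_E)
  with Suc.IH[of t''] ra_step_arm_potential[of t'' t'] show ?case
    by simp
qed

lemma ra_step_from_Node_Leaf:
  "ra_step (Node (Node A B) Leaf) t \<Longrightarrow> t = Node A (Node B Leaf)"
  by (auto elim: ra_step.cases)

lemma ra_step_to_Node_Leaf:
  "ra_step t (Node (Node A B) Leaf) \<Longrightarrow> t = Node A (Node B Leaf)"
  by (auto elim: ra_step.cases)

lemma relpowp_ra_step_Node_Leaf_lower_bound: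
  assumes steps: "(ra_step ^^ k) (Node (Node A B) Leaf) (Node (Node C D) Leaf)"
    and distinct: "(A, B) \<noteq> (C, D)"
  shows "arm_potential (Node C (Node D Leaf)) - arm_potential (Node A (Node B Leaf)) + 2 \<le> k"
proof -
  obtain k' where k': "k = Suc k'"
    using steps distinct by (cases k) auto
  with steps obtain X where "ra_step (Node (Node A B) Leaf) X"
      and "(ra_step ^^ k') X (Node (Node C D) Leaf)"
    by (metis relpowp_Suc_E2)
  then have after_first: "(ra_step ^^ k') (Node A (Node B Leaf)) (Node (Node C D) Leaf)"
    by (auto dest: ra_step_from_Node_Leaf)
  then obtain k'' where k'': "k' = Suc k''"
    by (cases k') auto
  with after_first obtain Y where "(ra_step ^^ k'') (Node A (Node B Leaf)) Y"
      and "ra_step Y (Node (Node C D) Leaf)"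
    by (metis relpowp_Suc_E)
  then have "(ra_step ^^ k'') (Node A (Node B Leaf)) (Node C (Node D Leaf))"
    by (auto dest: ra_step_to_Node_Leaf)
  from relpowp_ra_step_arm_potential[OF this] show ?thesis
    using k' k'' by simp
qed

lemma d_RA_eq_enatI:
  assumes "(ra_step ^^ k) T1 T2" and "\<And>j. (ra_step ^^ j) T1 T2 \<Longrightarrow> k \<le> j"
  shows "d_RA T1 T2 = enat k"
proof -
  have "(LEAST j. (ra_step ^^ j) T1 T2) = k"
    using assms by (blast intro: Least_equality)
  with assms(1) show ?thesis
    unfolding d_RA_def by auto
qed

theorem theorem4p1:
  fixes n :: nat
  assumes "n \<ge> 3"
  shows "\<exists>T1 T2. nodes T1 = n \<and> nodes T2 = n \<and> d_RA T1 T2 = enat (2 * n - 2)"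
proof -
  define p where "p = n - 2"
  have n: "n = Suc (Suc p)" and "p \<ge> 1"
    using assms by (auto simp: p_def)
  define T1 where "T1 = Node (right_comb (Suc p)) Leaf"
  define T2 where "T2 = left_comb (Suc (Suc p))"
  have lower: "2 * n - 2 \<le> j" if "(ra_step ^^ j) T1 T2" for j
  proof -
    have "left_comb p \<noteq> Leaf"
      using \<open>p \<ge> 1\<close> by (cases p) auto
    with that have "arm_potential (Node (left_comb p) (Node Leaf Leaf))
                    - arm_potential (Node Leaf (Node (right_comb p) Leaf)) + 2 \<le> j"
      by (intro relpowp_ra_step_Node_Leaf_lower_bound)
         (auto simp: T1_def T2_def)
    then show ?thesis
      by (simp add: arm_potential_def n)
  qed
  have "(ra_step ^^ (2 * n - 2)) T1 T2"
    using relpowp_ra_step_to_left_comb[of "Suc p"] by (simp add: T1_def T2_def n)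
  then have "d_RA T1 T2 = enat (2 * n - 2)"
    using lower by (rule d_RA_eq_enatI)
  moreover have "nodes T1 = n" "nodes T2 = n"
    by (simp_all add: T1_def T2_def n)
  ultimately show ?thesis by blast
qed

end
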